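(* The flag curvature of the Funk–Finsler metric $\mathcal{F}$ on $\mathbb{D}_K(1)$ at the centre $\mathbf{0}=(0,0)$ is independent of the direction $\xi\neq0$ and equals $$\mathbf{K}(\mathbf{0},\xi)=-\Big(1-\tfrac34(1-r^2)^2\Big)=-\Big(1-\tfrac34\Big(\tfrac{4e^2}{(e^2+1)^2}\Big)^2\Big)<0.$$
   Context: $r=\frac{e^2-1}{e^2+1}$, $\mathbb{D}_K(1)=\{x\in\mathbb{R}^2:|x|<r\}$, $\mathcal{F}(x,\xi)=\frac{\sqrt{(r^2-|x|^2)|\xi|^2+\langle x,\xi\rangle^2}}{r^2-|x|^2}+\frac{(1-r^2)\langle x,\xi\rangle}{(r^2-|x|^2)(1-|x|^2)}$. The flag curvature of a 2-dimensional Finsler metric $F$ is $\mathbf{K}=\mathrm{Ric}/F^2$ where $\mathrm{Ric}=R^i_i$ is the trace of the Riemann curvature $R^i_k=2\partial_{x^k}G^i-\xi^j\partial_{x^j}\partial_{\xi^k}G^i+2G^j\partial_{\xi^j}\partial_{\xi^k}G^i-\partial_{\xi^j}G^i\,\partial_{\xi^k}G^j$ and $G^i$ are the spray coefficients $G^i=\frac14g^{i\ell}\{[F^2]_{x^k\xi^\ell}\xi^k-[F^2]_{x^\ell}\}$. *)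

theory Defs
  imports "HOL-Analysis.Analysis"
begin

text \<open>Phase-space points of the tangent bundle of an open subset of R^2 are encoded as
  functions z :: nat => real, where z 0, z 1 are the position coordinates x^1, x^2 and
  z 2, z 3 are the direction coordinates xi^1, xi^2.  Index i in {0,1} corresponds to
  the coordinate x^(i+1), and index 2+i to xi^(i+1).\<close>

definition pt :: "real \<times> real \<Rightarrow> real \<times> real \<Rightarrow> nat \<Rightarrow> real" where
  "pt x xi = (\<lambda>i. if i = 0 then fst x else if i = 1 then snd x
                  else if i = 2 then fst xi else snd xi)"

definition pd :: "nat \<Rightarrow> ((nat \<Rightarrow> real) \<Rightarrow> real) \<Rightarrow> (nat \<Rightarrow> real) \<Rightarrow> real" where
  "pd k f z = deriv (\<lambda>t. f (z(k := t))) (z k)"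

definition rK :: real where
  "rK = (exp 2 - 1) / (exp 2 + 1)"

definition DK1 :: "(real \<times> real) set" where
  "DK1 = {x. sqrt ((fst x)^2 + (snd x)^2) < rK}"

definition FF :: "(nat \<Rightarrow> real) \<Rightarrow> real" where
  "FF z = (let r = rK; x1 = z 0; x2 = z 1; y1 = z 2; y2 = z 3;
              nx = x1^2 + x2^2; ny = y1^2 + y2^2; ip = x1*y1 + x2*y2 in
           sqrt ((r^2 - nx) * ny + ip^2) / (r^2 - nx)
           + (1 - r^2) * ip / ((r^2 - nx) * (1 - nx)))"

definition Fsq :: "((nat \<Rightarrow> real) \<Rightarrow> real) \<Rightarrow> (nat \<Rightarrow> real) \<Rightarrow> real" where
  "Fsq F z = (F z)^2"

definition gT :: "((nat \<Rightarrow> real) \<Rightarrow> real) \<Rightarrow> nat \<Rightarrow> nat \<Rightarrow> (nat \<Rightarrow> real) \<Rightarrow> real" where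
  "gT F i l z = (1/2) * pd (2+i) (pd (2+l) (Fsq F)) z"

definition gInv :: "((nat \<Rightarrow> real) \<Rightarrow> real) \<Rightarrow> nat \<Rightarrow> nat \<Rightarrow> (nat \<Rightarrow> real) \<Rightarrow> real" where
  "gInv F i l z = (let d = gT F 0 0 z * gT F 1 1 z - gT F 0 1 z * gT F 1 0 z in
     if i = 0 \<and> l = 0 then gT F 1 1 z / d
     else if i = 1 \<and> l = 1 then gT F 0 0 z / d
     else - gT F i l z / d)"

definition Gspr :: "((nat \<Rightarrow> real) \<Rightarrow> real) \<Rightarrow> nat \<Rightarrow> (nat \<Rightarrow> real) \<Rightarrow> real" where
  "Gspr F i z = (1/4) * (\<Sum>l<2. gInv F i l z *
      ((\<Sum>k<2. pd k (pd (2+l) (Fsq F)) z * z (2+k)) - pd l (Fsq F) z))"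

definition Riem :: "((nat \<Rightarrow> real) \<Rightarrow> real) \<Rightarrow> nat \<Rightarrow> nat \<Rightarrow> (nat \<Rightarrow> real) \<Rightarrow> real" where
  "Riem F i k z =
     2 * pd k (Gspr F i) z
     - (\<Sum>j<2. z (2+j) * pd j (pd (2+k) (Gspr F i)) z)
     + 2 * (\<Sum>j<2. Gspr F j z * pd (2+j) (pd (2+k) (Gspr F i)) z)
     - (\<Sum>j<2. pd (2+j) (Gspr F i) z * pd (2+k) (Gspr F j) z)"

definition Ric :: "((nat \<Rightarrow> real) \<Rightarrow> real) \<Rightarrow> (nat \<Rightarrow> real) \<Rightarrow> real" where
  "Ric F z = (\<Sum>i<2. Riem F i i z)"

definition flag_curv :: "((nat \<Rightarrow> real) \<Rightarrow> real) \<Rightarrow> (nat \<Rightarrow> real) \<Rightarrow> real" where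
  "flag_curv F z = Ric F z / (F z)^2"

end

theory Submission
  imports Defs
begin

text \<open>
  The Funk-Finsler metric F = Theta - <x,y>/(1 - |x|^2), with Theta the Funk metric of the disc of
  radius r, satisfies Hamel's equation F_{x^k y^l} y^k = F_{x^l}.  Hence it is projectively flat:
  its spray is G^i = P y^i with P = F_{x^k} y^k / (2 F).  For such a spray the Ricci scalar is an
  explicit expression in P and its first and second derivatives, which at the centre, where
  F = |xi| / r and P = (1 - r^2) |xi| / (2 r), reduces to Ric = P^2 - P_{x^k y^l} xi^k xi^l with
  P_{x^k y^l} = (2 - (1 - r^2)^2) / (2 r^2) delta_{kl}.  Dividing by F^2 gives
  K = (1 - r^2)^2 / 4 - (2 - (1 - r^2)^2) / 2 = -(1 - 3/4 (1 - r^2)^2).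
\<close>

section \<open>Partial derivatives along coordinate lines\<close>

lemma pd_eqI:
  "((\<lambda>t. f (z(m := t))) has_real_derivative D) (at (z m)) \<Longrightarrow> pd m f z = D"
  unfolding pd_def by (rule DERIV_imp_deriv)

lemma DERIV_pd:
  "(\<lambda>t. f (z(m := t))) field_differentiable at (z m) \<Longrightarrow>
    ((\<lambda>t. f (z(m := t))) has_real_derivative pd m f z) (at (z m))"
  unfolding pd_def by (simp add: DERIV_deriv_iff_field_differentiable)

lemma DERIV_coord: "((\<lambda>t. (z(m := t)) j) has_real_derivative (if j = m then 1 else 0)) (at (z m))"
  by (cases "j = m") simp_all

lemma eventually_fun_upd_in_open:
  fixes U :: "('a \<Rightarrow> 'b::topological_space) set"
  assumes "open U" "z \<in> U"
  shows "\<forall>\<^sub>F t in nhds (z m). z(m := t) \<in> U"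
proof -
  have "continuous_on UNIV (\<lambda>t. z(m := t))"
  proof (rule continuous_on_coordinatewise_then_product)
    show "continuous_on UNIV (\<lambda>t. (z(m := t)) i)" for i
      by (cases "i = m") simp_all
  qed
  then have "open ((\<lambda>t. z(m := t)) -` U)"
    by (rule open_vimage[OF assms(1)])
  moreover have "z m \<in> (\<lambda>t. z(m := t)) -` U"
    using assms(2) by simp
  ultimately show ?thesis
    by (rule eventually_nhds_in_open[THEN eventually_mono]) simp
qed

lemma eventually_coord_line_eq_open:
  fixes U :: "('a \<Rightarrow> 'b::topological_space) set"
  assumes "open U" "z \<in> U" "\<And>w. w \<in> U \<Longrightarrow> f w = g w"
  shows "\<forall>\<^sub>F t in nhds (z m). f (z(m := t)) = g (z(m := t))"
  using eventually_fun_upd_in_open[OF assms(1,2), of m] assms(3) by (auto elim: eventually_mono)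

lemma pd_cong_open:
  assumes "open U" "z \<in> U" "\<And>w. w \<in> U \<Longrightarrow> f w = g w"
  shows "pd m f z = pd m g z"
  unfolding pd_def by (rule deriv_cong_ev[OF eventually_coord_line_eq_open[OF assms] refl])

lemma DERIV_coord_cong_open:
  assumes "open U" "z \<in> U" "\<And>w. w \<in> U \<Longrightarrow> f w = g w"
    and "((\<lambda>t. g (z(m := t))) has_real_derivative D) (at (z m))"
  shows "((\<lambda>t. f (z(m := t))) has_real_derivative D) (at (z m))"
  using assms(4) by (subst DERIV_cong_ev[OF refl eventually_coord_line_eq_open[OF assms(1-3)] refl])

lemma pd_mult_coord:
  assumes "(\<lambda>t. P (w(m := t))) field_differentiable at (w m)"
  shows "pd m (\<lambda>v. P v * v j) w = pd m P w * w j + P w * (if j = m then 1 else 0)"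
  by (rule pd_eqI) (auto intro!: derivative_eq_intros DERIV_pd[OF assms] DERIV_coord)

lemma pd_add_mult_coord:
  assumes "(\<lambda>t. P (w(m := t))) field_differentiable at (w m)"
    and "(\<lambda>t. Q (w(m := t))) field_differentiable at (w m)"
  shows "pd m (\<lambda>v. Q v * v j + P v) w = pd m Q w * w j + Q w * (if j = m then 1 else 0) + pd m P w"
  by (rule pd_eqI) (auto intro!: derivative_eq_intros DERIV_pd[OF assms(1)] DERIV_pd[OF assms(2)] DERIV_coord)

lemma sum_lessThan_2: "(\<Sum>l<(2::nat). f l) = f 0 + f 1"
  by (simp add: numeral_2_eq_2)

section \<open>Projectively flat sprays in dimension two\<close>

definition yperp :: "(nat \<Rightarrow> real) \<Rightarrow> nat \<Rightarrow> real" where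
  "yperp z l = (if l = 0 then - z 3 else z 2)"

lemma gInv_solve:
  fixes F :: "(nat \<Rightarrow> real) \<Rightarrow> real" and v :: "nat \<Rightarrow> real"
  assumes "F z \<noteq> 0" "gT F 0 1 z = gT F 1 0 z"
    and det: "gT F 0 0 z * gT F 1 1 z - gT F 0 1 z * gT F 1 0 z \<noteq> 0"
    and g_y: "\<And>i. i < 2 \<Longrightarrow> gT F i 0 z * z 2 + gT F i 1 z * z 3 = F z * v i"
    and "i < 2"
  shows "gInv F i 0 z * v 0 + gInv F i 1 z * v 1 = z (2 + i) / F z"
proof -
  define g where "g i l = gT F i l z" for i l
  define d where "d = g 0 0 * g 1 1 - g 0 1 * g 1 0"
  have y0: "g 0 0 * z 2 + g 0 1 * z 3 = F z * v 0" and y1: "g 1 0 * z 2 + g 1 1 * z 3 = F z * v 1"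
    using g_y[of 0] g_y[of 1] by (simp_all add: g_def)
  have "F z * (g 1 1 * v 0 - g 0 1 * v 1) = d * z 2" "F z * (g 0 0 * v 1 - g 1 0 * v 0) = d * z 3"
    using y0 y1 assms(2) unfolding d_def g_def by algebra+
  then have adj: "(g 1 1 * v 0 - g 0 1 * v 1) / d = z 2 / F z" "(g 0 0 * v 1 - g 1 0 * v 0) / d = z 3 / F z"
    using det assms(1) by (simp_all add: d_def g_def field_simps)
  show ?thesis
  proof (cases "i = 0")
    case True
    then show ?thesis
      using adj(1) by (simp add: gInv_def g_def d_def diff_divide_distrib)
  next
    case False
    then have "i = 1"
      using \<open>i < 2\<close> by simp
    then show ?thesis
      using adj(2) by (simp add: gInv_def g_def d_def diff_divide_distrib)
  qed
qed

text \<open>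
  In dimension two the fundamental tensor is F_y F_y^T plus a multiple of yperp yperp^T.  Euler's
  relation and Hamel's equation turn the bracket in the spray formula into 2 N F_{y^l} with
  N = F_{x^k} y^k, and g y = F F_y, so Cramer's rule gives G = N / (2 F) y.
\<close>

lemma Gspr_projective:
  fixes F :: "(nat \<Rightarrow> real) \<Rightarrow> real" and Fx Fy :: "nat \<Rightarrow> real" and Fyx :: "nat \<Rightarrow> nat \<Rightarrow> real"
  assumes pos: "0 < F z" "0 < M"
    and x_deriv: "\<And>l. l < 2 \<Longrightarrow> pd l (Fsq F) z = 2 * F z * Fx l"
    and yx_deriv: "\<And>k l. k < 2 \<Longrightarrow> l < 2 \<Longrightarrow> pd k (pd (2 + l) (Fsq F)) z = 2 * (Fx k * Fy l + F z * Fyx l k)"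
    and tensor: "\<And>i l. i < 2 \<Longrightarrow> l < 2 \<Longrightarrow> gT F i l z = Fy i * Fy l + F z * M * yperp z i * yperp z l"
    and euler: "Fy 0 * z 2 + Fy 1 * z 3 = F z"
    and hamel: "\<And>l. l < 2 \<Longrightarrow> Fyx l 0 * z 2 + Fyx l 1 * z 3 = Fx l"
    and "i < 2"
  shows "Gspr F i z = (Fx 0 * z 2 + Fx 1 * z 3) / (2 * F z) * z (2 + i)"
proof -
  define N where "N = Fx 0 * z 2 + Fx 1 * z 3"
  have geodesic_rhs: "(\<Sum>k<2. pd k (pd (2 + l) (Fsq F)) z * z (2 + k)) - pd l (Fsq F) z = 2 * N * Fy l"
    if "l < 2" for l
  proof -
    have "(\<Sum>k<2. pd k (pd (2 + l) (Fsq F)) z * z (2 + k)) - pd l (Fsq F) z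
        = 2 * Fy l * N + 2 * F z * (Fyx l 0 * z 2 + Fyx l 1 * z 3 - Fx l)"
      unfolding sum_lessThan_2 using yx_deriv[OF _ that] x_deriv[OF that]
      by (simp add: N_def algebra_simps numeral_2_eq_2 numeral_3_eq_3)
    then show ?thesis
      using hamel[OF that] by simp
  qed
  have g_y: "gT F i 0 z * z 2 + gT F i 1 z * z 3 = F z * Fy i" if "i < 2" for i
  proof -
    have "gT F i 0 z * z 2 + gT F i 1 z * z 3 = Fy i * (Fy 0 * z 2 + Fy 1 * z 3)"
      using that by (simp add: tensor yperp_def algebra_simps)
    then show ?thesis
      using euler by simp
  qed
  have "gT F 0 0 z * gT F 1 1 z - gT F 0 1 z * gT F 1 0 z = F z * M * (Fy 0 * z 2 + Fy 1 * z 3)^2"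
    by (simp add: tensor yperp_def power2_eq_square algebra_simps)
  then have det: "gT F 0 0 z * gT F 1 1 z - gT F 0 1 z * gT F 1 0 z \<noteq> 0"
    using pos euler by simp
  have "Gspr F i z = 1 / 4 * (\<Sum>l<2. gInv F i l z * (2 * N * Fy l))"
    unfolding Gspr_def
    by (intro arg_cong[where f = "\<lambda>s. 1 / 4 * s"] sum.cong refl) (simp only: lessThan_iff geodesic_rhs)
  also have "\<dots> = N / 2 * (gInv F i 0 z * Fy 0 + gInv F i 1 z * Fy 1)"
    by (simp add: sum_lessThan_2 algebra_simps)
  also have "\<dots> = N / (2 * F z) * z (2 + i)"
    using gInv_solve[OF _ _ det g_y \<open>i < 2\<close>] pos(1) by (simp add: tensor)
  finally show ?thesis
    unfolding N_def .
qed

lemma Ric_projective_spray: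
  fixes F P :: "(nat \<Rightarrow> real) \<Rightarrow> real"
  assumes "open U" "z \<in> U"
    and spray: "\<And>w i. w \<in> U \<Longrightarrow> i < 2 \<Longrightarrow> Gspr F i w = P w * w (2 + i)"
    and P_diff: "\<And>w m. w \<in> U \<Longrightarrow> m < 4 \<Longrightarrow> (\<lambda>t. P (w(m := t))) field_differentiable at (w m)"
    and Py_diff: "\<And>k m. k < 2 \<Longrightarrow> m < 4 \<Longrightarrow> (\<lambda>t. pd (2 + k) P (z(m := t))) field_differentiable at (z m)"
  shows "Ric F z =
      2 * P z * (\<Sum>j<2. \<Sum>k<2. pd (2 + j) (pd (2 + k) P) z * z (2 + j) * z (2 + k))
    + 4 * P z * (\<Sum>k<2. pd (2 + k) P z * z (2 + k)) - (\<Sum>k<2. pd (2 + k) P z * z (2 + k))^2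
    - 2 * (P z)^2 - (\<Sum>j<2. \<Sum>k<2. pd j (pd (2 + k) P) z * z (2 + j) * z (2 + k))"
proof -
  have G1: "pd m (Gspr F i) w = pd m P w * w (2 + i) + P w * (if 2 + i = m then 1 else 0)"
    if "w \<in> U" "m < 4" "i < 2" for w m i
  proof -
    have "pd m (Gspr F i) w = pd m (\<lambda>v. P v * v (2 + i)) w"
      using assms(1) that(1) by (rule pd_cong_open) (simp add: spray that(3))
    also have "\<dots> = pd m P w * w (2 + i) + P w * (if 2 + i = m then 1 else 0)"
      by (rule pd_mult_coord[OF P_diff[OF that(1,2)]])
    finally show ?thesis .
  qed
  have G2: "pd m (pd (2 + i) (Gspr F i)) z
      = pd m (pd (2 + i) P) z * z (2 + i) + pd (2 + i) P z * (if 2 + i = m then 1 else 0) + pd m P z"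
    if "m < 4" "i < 2" for m i
  proof -
    have "pd m (pd (2 + i) (Gspr F i)) z = pd m (\<lambda>v. pd (2 + i) P v * v (2 + i) + P v) z"
      using assms(1,2) by (rule pd_cong_open) (simp add: G1 that(2))
    also have "\<dots> = pd m (pd (2 + i) P) z * z (2 + i) + pd (2 + i) P z * (if 2 + i = m then 1 else 0) + pd m P z"
      by (rule pd_add_mult_coord[OF P_diff[OF assms(2) that(1)] Py_diff[OF that(2,1)]])
    finally show ?thesis .
  qed
  note G1z = G1[OF assms(2)]
  show ?thesis
    unfolding Ric_def Riem_def sum_lessThan_2
    using G1z[of 0 0] G1z[of 1 1] G1z[of 2 0] G1z[of 3 0] G1z[of 2 1] G1z[of 3 1]
      G2[of 0 0] G2[of 1 0] G2[of 0 1] G2[of 1 1] G2[of 2 0] G2[of 3 0] G2[of 2 1] G2[of 3 1]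
      spray[OF assms(2), of 0] spray[OF assms(2), of 1]
    by (simp add: algebra_simps power2_eq_square numeral_2_eq_2 numeral_3_eq_3)
qed

section \<open>The Funk-Finsler metric on the slit tangent bundle\<close>

definition bK :: real where
  "bK = 1 - rK^2"

definition funk_a :: "(nat \<Rightarrow> real) \<Rightarrow> real" where
  "funk_a z = rK^2 - ((z 0)^2 + (z 1)^2)"

definition funk_c :: "(nat \<Rightarrow> real) \<Rightarrow> real" where
  "funk_c z = 1 - ((z 0)^2 + (z 1)^2)"

definition funk_p :: "(nat \<Rightarrow> real) \<Rightarrow> real" where
  "funk_p z = z 0 * z 2 + z 1 * z 3"

definition funk_q :: "(nat \<Rightarrow> real) \<Rightarrow> real" where
  "funk_q z = (z 2)^2 + (z 3)^2"

definition funk_S :: "(nat \<Rightarrow> real) \<Rightarrow> real" where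
  "funk_S z = sqrt (funk_a z * funk_q z + (funk_p z)^2)"

definition TD0 :: "(nat \<Rightarrow> real) set" where
  "TD0 = {z. (z 0)^2 + (z 1)^2 < rK^2 \<and> 0 < (z 2)^2 + (z 3)^2}"

lemma rK_pos: "0 < rK" and rK_less_1: "rK < 1"
proof -
  have "0 < exp (2::real) - 1" "0 < exp (2::real) + 1"
    by (simp_all add: add_pos_pos)
  then show "0 < rK" "rK < 1"
    unfolding rK_def by (simp_all add: divide_simps)
qed

lemma bK_pos: "0 < bK" and bK_less_1: "bK < 1"
  using rK_pos rK_less_1 by (simp_all add: bK_def power_less_one_iff)

lemma bK_eq: "bK = 4 * exp 2 / (exp 2 + 1)^2"
proof -
  have "(exp 2 + 1)^2 - (exp 2 - 1)^2 = 4 * exp (2::real)"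
    by (simp add: power2_eq_square algebra_simps)
  moreover have "(exp (2::real) + 1)^2 \<noteq> 0"
    by (metis add_pos_pos exp_gt_zero power_not_zero zero_less_one less_irrefl)
  ultimately show ?thesis
    unfolding bK_def rK_def by (simp add: power_divide field_simps)
qed

lemma open_TD0: "open TD0"
  unfolding TD0_def Collect_conj_eq
  by (intro open_Int open_Collect_less continuous_intros continuous_on_product_coordinates)

lemma FF_eq: "FF z = funk_S z / funk_a z + bK * funk_p z / (funk_a z * funk_c z)"
  unfolding FF_def funk_S_def funk_a_def funk_c_def funk_p_def funk_q_def bK_def Let_def by simp

lemma TD0_facts:
  assumes "z \<in> TD0"
  shows "0 < funk_a z" "0 < funk_q z" "0 < funk_S z" "bK < funk_c z" "0 < funk_c z"
    and funk_S_sq: "(funk_S z)^2 = funk_a z * funk_q z + (funk_p z)^2"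
proof -
  show a: "0 < funk_a z" and q: "0 < funk_q z" and bc: "bK < funk_c z"
    using assms by (simp_all add: TD0_def funk_a_def funk_q_def funk_c_def bK_def)
  then have "0 < funk_a z * funk_q z + (funk_p z)^2"
    by (simp add: add_pos_nonneg)
  then show "0 < funk_S z" "(funk_S z)^2 = funk_a z * funk_q z + (funk_p z)^2"
    by (simp_all add: funk_S_def)
  show "0 < funk_c z"
    using bc bK_pos by linarith
qed

lemma less_4_cases: "(m::nat) < 4 \<Longrightarrow> m = 0 \<or> m = 1 \<or> m = 2 \<or> m = 3"
  by auto

text \<open>The primed functions are derivatives along the m-th coordinate line; they are meaningful
  only for m < 4 (for larger m the truncated subtraction in funk_p' gives junk).\<close>

definition funk_a' :: "nat \<Rightarrow> (nat \<Rightarrow> real) \<Rightarrow> real" where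
  "funk_a' m z = (if m < 2 then - 2 * z m else 0)"

definition funk_p' :: "nat \<Rightarrow> (nat \<Rightarrow> real) \<Rightarrow> real" where
  "funk_p' m z = (if m < 2 then z (m + 2) else z (m - 2))"

definition funk_q' :: "nat \<Rightarrow> (nat \<Rightarrow> real) \<Rightarrow> real" where
  "funk_q' m z = (if m < 2 then 0 else 2 * z m)"

definition funk_S' :: "nat \<Rightarrow> (nat \<Rightarrow> real) \<Rightarrow> real" where
  "funk_S' m z = (funk_a' m z * funk_q z + funk_a z * funk_q' m z + 2 * funk_p z * funk_p' m z)
     / (2 * funk_S z)"

lemma DERIV_funk_a: "m < 4 \<Longrightarrow> ((\<lambda>t. funk_a (z(m := t))) has_real_derivative funk_a' m z) (at (z m))"
  unfolding funk_a_def funk_a'_def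
  by (drule less_4_cases) (auto intro!: derivative_eq_intros)

lemma DERIV_funk_c: "m < 4 \<Longrightarrow> ((\<lambda>t. funk_c (z(m := t))) has_real_derivative funk_a' m z) (at (z m))"
  unfolding funk_c_def funk_a'_def
  by (drule less_4_cases) (auto intro!: derivative_eq_intros)

lemma DERIV_funk_p: "m < 4 \<Longrightarrow> ((\<lambda>t. funk_p (z(m := t))) has_real_derivative funk_p' m z) (at (z m))"
  unfolding funk_p_def funk_p'_def
  by (drule less_4_cases) (auto intro!: derivative_eq_intros simp: numeral_2_eq_2 numeral_3_eq_3)

lemma DERIV_funk_q: "m < 4 \<Longrightarrow> ((\<lambda>t. funk_q (z(m := t))) has_real_derivative funk_q' m z) (at (z m))"
  unfolding funk_q_def funk_q'_def
  by (drule less_4_cases) (auto intro!: derivative_eq_intros)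

lemma DERIV_funk_S:
  assumes "z \<in> TD0" "m < 4"
  shows "((\<lambda>t. funk_S (z(m := t))) has_real_derivative funk_S' m z) (at (z m))"
proof -
  have "0 < funk_a z * funk_q z + (funk_p z)^2"
    using TD0_facts[OF assms(1)] by (simp add: add_pos_nonneg)
  then show ?thesis
    unfolding funk_S_def[abs_def] funk_S'_def
    by (auto intro!: derivative_eq_intros DERIV_funk_a DERIV_funk_q DERIV_funk_p assms(2)
        simp: field_simps)
qed

lemmas funk_derivs = DERIV_coord[THEN DERIV_cong] DERIV_funk_a[THEN DERIV_cong]
  DERIV_funk_c[THEN DERIV_cong] DERIV_funk_p[THEN DERIV_cong] DERIV_funk_q[THEN DERIV_cong]
  DERIV_funk_S[THEN DERIV_cong]

definition FF' :: "nat \<Rightarrow> (nat \<Rightarrow> real) \<Rightarrow> real" where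
  "FF' m z = (funk_S' m z * funk_a z - funk_S z * funk_a' m z) / (funk_a z)^2
     + bK * (funk_p' m z * (funk_a z * funk_c z) - funk_p z * (funk_a' m z * funk_c z + funk_a z * funk_a' m z))
       / (funk_a z * funk_c z)^2"

definition FFy :: "nat \<Rightarrow> (nat \<Rightarrow> real) \<Rightarrow> real" where
  "FFy l z = (funk_a z * z (2 + l) + funk_p z * z l) / (funk_S z * funk_a z) + bK * z l / (funk_a z * funk_c z)"

definition FFy' :: "nat \<Rightarrow> nat \<Rightarrow> (nat \<Rightarrow> real) \<Rightarrow> real" where
  "FFy' l m z =
     ((funk_a' m z * z (2 + l) + funk_a z * (if m = 2 + l then 1 else 0) + funk_p' m z * z l
        + funk_p z * (if m = l then 1 else 0)) * (funk_S z * funk_a z)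
      - (funk_a z * z (2 + l) + funk_p z * z l) * (funk_S' m z * funk_a z + funk_S z * funk_a' m z))
       / (funk_S z * funk_a z)^2
   + bK * ((if m = l then 1 else 0) * (funk_a z * funk_c z) - z l * (funk_a' m z * funk_c z + funk_a z * funk_a' m z))
       / (funk_a z * funk_c z)^2"

lemma DERIV_FF:
  assumes "z \<in> TD0" "m < 4"
  shows "((\<lambda>t. FF (z(m := t))) has_real_derivative FF' m z) (at (z m))"
proof -
  note pos = TD0_facts[OF assms(1)]
  show ?thesis
    unfolding FF_eq FF'_def
    by (rule derivative_eq_intros funk_derivs assms refl | use pos in \<open>simp; fail\<close>)+
      (use pos in \<open>simp add: field_simps power2_eq_square\<close>)
qed

lemma DERIV_FFy:
  assumes "z \<in> TD0" "m < 4"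
  shows "((\<lambda>t. FFy l (z(m := t))) has_real_derivative FFy' l m z) (at (z m))"
proof -
  note pos = TD0_facts[OF assms(1)]
  show ?thesis
    unfolding FFy_def[abs_def] FFy'_def
    by (rule derivative_eq_intros funk_derivs assms refl | use pos in \<open>simp; fail\<close>)+
      (use pos in \<open>simp add: field_simps power2_eq_square eq_commute[of m]\<close>)
qed

lemma FF'_y:
  assumes "z \<in> TD0" "l < 2"
  shows "FF' (2 + l) z = FFy l z"
  using assms(2) TD0_facts[OF assms(1)]
  unfolding FF'_def FFy_def funk_S'_def funk_a'_def funk_p'_def funk_q'_def
  by (auto simp: less_2_cases_iff field_simps power2_eq_square)

lemma FFy_euler:
  assumes "z \<in> TD0"
  shows "FFy 0 z * z 2 + FFy 1 z * z 3 = FF z"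
proof -
  note pos = TD0_facts[OF assms]
  have "FFy 0 z * z 2 + FFy 1 z * z 3
      = (funk_a z * funk_q z + (funk_p z)^2) / (funk_S z * funk_a z) + bK * funk_p z / (funk_a z * funk_c z)"
    unfolding FFy_def using pos
    by (simp add: field_simps funk_p_def funk_q_def power2_eq_square numeral_2_eq_2 numeral_3_eq_3)
  also have "\<dots> = FF z"
    unfolding FF_eq pos(6)[symmetric] using pos(1,3) by (simp add: power2_eq_square)
  finally show ?thesis .
qed

definition funk_N :: "(nat \<Rightarrow> real) \<Rightarrow> real" where
  "funk_N z = 2 * funk_S z * funk_p z / (funk_a z)^2
     + bK * (funk_q z * funk_a z * funk_c z + 2 * (funk_p z)^2 * (funk_c z + funk_a z)) / (funk_a z * funk_c z)^2"

lemma FF'_dot_y: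
  assumes "z \<in> TD0"
  shows "FF' 0 z * z 2 + FF' 1 z * z 3 = funk_N z"
  using TD0_facts[OF assms]
  unfolding FF'_def funk_N_def funk_S'_def funk_a'_def funk_p'_def funk_q'_def funk_q_def funk_p_def
  by (simp add: field_simps power2_eq_square numeral_2_eq_2 numeral_3_eq_3)

lemma FF_pos:
  assumes "z \<in> TD0"
  shows "0 < FF z"
proof -
  note pos = TD0_facts[OF assms]
  have "(bK * \<bar>funk_p z\<bar>)^2 < (funk_c z * funk_S z)^2"
  proof -
    have "(bK * \<bar>funk_p z\<bar>)^2 \<le> (funk_c z)^2 * (funk_p z)^2"
      using pos bK_pos by (simp add: power_mult_distrib mult_right_mono power_mono)
    also have "\<dots> < (funk_c z)^2 * (funk_a z * funk_q z + (funk_p z)^2)"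
      using pos by simp
    finally show ?thesis
      using pos(6) by (simp add: power_mult_distrib)
  qed
  moreover have "0 \<le> funk_c z * funk_S z"
    using pos by simp
  ultimately have "bK * \<bar>funk_p z\<bar> < funk_c z * funk_S z"
    by (rule power2_less_imp_less)
  moreover have "bK * - funk_p z \<le> bK * \<bar>funk_p z\<bar>"
    using bK_pos by (intro mult_left_mono) auto
  ultimately have "0 < funk_c z * funk_S z + bK * funk_p z"
    by linarith
  then show ?thesis
    unfolding FF_eq using pos by (simp add: field_simps)
qed

lemma FFy'_y:
  assumes "z \<in> TD0" "l < 2" "i < 2"
  shows "FFy' l (2 + i) z = rK^2 * yperp z l * yperp z i / (funk_S z)^3"
proof -
  note pos = TD0_facts[OF assms(1)]
  define u where "u j = funk_a z * z (2 + j) + funk_p z * z j" for j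
  have S': "funk_S' (2 + i) z = u i / funk_S z"
    using assms(3) pos unfolding funk_S'_def funk_a'_def funk_q'_def funk_p'_def u_def
    by (auto simp: less_2_cases_iff field_simps)
  have key: "(funk_a z * (if i = l then 1 else 0) + z i * z l) * (funk_S z)^2 - u l * u i
      = funk_a z * rK^2 * yperp z l * yperp z i"
    using assms(2,3) unfolding pos(6) u_def yperp_def funk_a_def funk_p_def funk_q_def
    by (auto simp: less_2_cases_iff) (simp_all add: algebra_simps power2_eq_square numeral_2_eq_2 numeral_3_eq_3)
  have "FFy' l (2 + i) z
      = ((funk_a z * (if i = l then 1 else 0) + z i * z l) * (funk_S z * funk_a z) - u l * (u i * funk_a z / funk_S z))
        / (funk_S z * funk_a z)^2"
    using assms(2,3) unfolding FFy'_def S' unfolding u_def funk_a'_def funk_p'_def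
    by (auto simp: less_2_cases_iff)
  also have "\<dots> = ((funk_a z * (if i = l then 1 else 0) + z i * z l) * (funk_S z)^2 - u l * u i)
      / ((funk_S z)^3 * funk_a z)"
    using pos(1,3) by (simp add: field_simps power2_eq_square power3_eq_cube)
  also have "\<dots> = rK^2 * yperp z l * yperp z i / (funk_S z)^3"
    unfolding key using pos(1,3) by (simp add: field_simps)
  finally show ?thesis .
qed

lemma FFy'_hamel:
  assumes "z \<in> TD0" "l < 2"
  shows "FFy' l 0 z * z 2 + FFy' l 1 z * z 3 = FF' l z"
proof -
  note pos = TD0_facts[OF assms(1)]
  define u where "u = funk_a z * z (2 + l) + funk_p z * z l"
  define T where "T = bK * (z (2 + l) * funk_a z * funk_c z + 2 * funk_p z * z l * (funk_c z + funk_a z))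
    / (funk_a z * funk_c z)^2"
  have "FFy' l 0 z * z 2 + FFy' l 1 z * z 3
      = (funk_q z * z l - funk_p z * z (2 + l)) / (funk_S z * funk_a z) + 2 * funk_p z * u / (funk_S z * (funk_a z)^2) + T"
    using assms(2) pos
    unfolding FFy'_def funk_S'_def funk_a'_def funk_p'_def funk_q'_def T_def u_def funk_q_def funk_p_def
    by (auto simp: less_2_cases_iff) (simp_all add: field_simps power2_eq_square numeral_2_eq_2 numeral_3_eq_3)
  also have "(funk_q z * z l - funk_p z * z (2 + l)) / (funk_S z * funk_a z) + 2 * funk_p z * u / (funk_S z * (funk_a z)^2)
      = (funk_p z * z (2 + l) - z l * funk_q z) / (funk_S z * funk_a z) + 2 * funk_S z * z l / (funk_a z)^2"
  proof -
    have "(funk_q z * z l - funk_p z * z (2 + l)) * funk_a z + 2 * funk_p z * u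
        = (funk_p z * z (2 + l) - z l * funk_q z) * funk_a z + 2 * (funk_S z)^2 * z l"
      unfolding pos(6) u_def by (simp add: algebra_simps power2_eq_square)
    then show ?thesis
      using pos by (simp add: field_simps power2_eq_square)
  qed
  also have "\<dots> + T = FF' l z"
    using assms(2) pos unfolding FF'_def funk_S'_def funk_a'_def funk_p'_def funk_q'_def T_def
    by (auto simp: less_2_cases_iff) (simp_all add: field_simps power2_eq_square)
  finally show ?thesis .
qed

lemma pd_Fsq_FF:
  assumes "z \<in> TD0" "m < 4"
  shows "pd m (Fsq FF) z = 2 * FF z * FF' m z"
proof (rule pd_eqI)
  show "((\<lambda>t. Fsq FF (z(m := t))) has_real_derivative 2 * FF z * FF' m z) (at (z m))"
    unfolding Fsq_def by (rule derivative_eq_intros DERIV_FF[OF assms] refl | simp)+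
qed

lemma pd_pd_Fsq_FF:
  assumes "z \<in> TD0" "m < 4" "l < 2"
  shows "pd m (pd (2 + l) (Fsq FF)) z = 2 * (FF' m z * FFy l z + FF z * FFy' l m z)"
proof -
  have "pd m (pd (2 + l) (Fsq FF)) z = pd m (\<lambda>w. 2 * FF w * FFy l w) z"
    using open_TD0 assms(1) by (rule pd_cong_open) (simp add: pd_Fsq_FF FF'_y assms(3) del: add_2_eq_Suc)
  also have "\<dots> = 2 * (FF' m z * FFy l z + FF z * FFy' l m z)"
    by (rule pd_eqI) (rule derivative_eq_intros DERIV_FF[OF assms(1,2)] DERIV_FFy[OF assms(1,2)] refl
        | simp add: algebra_simps)+
  finally show ?thesis .
qed

definition funk_P :: "(nat \<Rightarrow> real) \<Rightarrow> real" where
  "funk_P z = funk_N z / (2 * FF z)"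

lemma Gspr_FF:
  assumes "z \<in> TD0" "i < 2"
  shows "Gspr FF i z = funk_P z * z (2 + i)"
proof -
  have "Gspr FF i z = (FF' 0 z * z 2 + FF' 1 z * z 3) / (2 * FF z) * z (2 + i)"
  proof (rule Gspr_projective[where M = "rK^2 / (funk_S z)^3"])
    show "0 < FF z"
      using FF_pos[OF assms(1)] .
    show "0 < rK^2 / (funk_S z)^3"
      using TD0_facts(3)[OF assms(1)] rK_pos by simp
    show "pd l (Fsq FF) z = 2 * FF z * FF' l z" if "l < 2" for l
      using that by (simp add: pd_Fsq_FF[OF assms(1)])
    show "pd k (pd (2 + l) (Fsq FF)) z = 2 * (FF' k z * FFy l z + FF z * FFy' l k z)" if "k < 2" "l < 2" for k l
      using that by (intro pd_pd_Fsq_FF[OF assms(1)]) simp_all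
    show "gT FF i l z = FFy i z * FFy l z + FF z * (rK^2 / (funk_S z)^3) * yperp z i * yperp z l"
      if "i < 2" "l < 2" for i l
    proof -
      have "pd (2 + i) (pd (2 + l) (Fsq FF)) z = 2 * (FF' (2 + i) z * FFy l z + FF z * FFy' l (2 + i) z)"
        using that by (intro pd_pd_Fsq_FF[OF assms(1)]) simp_all
      then show ?thesis
        unfolding gT_def FF'_y[OF assms(1) that(1)] FFy'_y[OF assms(1) that(2,1)]
        by (simp add: field_simps)
    qed
    show "FFy 0 z * z 2 + FFy 1 z * z 3 = FF z"
      by (rule FFy_euler[OF assms(1)])
    show "FFy' l 0 z * z 2 + FFy' l 1 z * z 3 = FF' l z" if "l < 2" for l
      by (rule FFy'_hamel[OF assms(1) that])
  qed (rule assms(2))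
  then show ?thesis
    unfolding FF'_dot_y[OF assms(1)] funk_P_def .
qed

lemma funk_P_differentiable:
  assumes "z \<in> TD0" "m < 4"
  shows "(\<lambda>t. funk_P (z(m := t))) field_differentiable at (z m)"
proof -
  note pos = TD0_facts[OF assms(1)] FF_pos[OF assms(1)]
  show ?thesis
    unfolding field_differentiable_def funk_P_def[abs_def] funk_N_def
    by (rule exI, (rule derivative_eq_intros funk_derivs DERIV_FF[THEN DERIV_cong] assms refl
        | use pos in \<open>simp; fail\<close>)+)
qed

definition funk_Ny :: "nat \<Rightarrow> (nat \<Rightarrow> real) \<Rightarrow> real" where
  "funk_Ny k z = 2 * ((funk_a z * z (2 + k) + funk_p z * z k) / funk_S z * funk_p z + funk_S z * z k) / (funk_a z)^2
     + bK * (2 * z (2 + k) * funk_a z * funk_c z + 4 * funk_p z * z k * (funk_c z + funk_a z))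
       / (funk_a z * funk_c z)^2"

definition funk_Py :: "nat \<Rightarrow> (nat \<Rightarrow> real) \<Rightarrow> real" where
  "funk_Py k z = (funk_Ny k z * (2 * FF z) - funk_N z * (2 * FFy k z)) / (2 * FF z)^2"

lemma DERIV_funk_N_y:
  assumes "z \<in> TD0" "k < 2"
  shows "((\<lambda>t. funk_N (z(2 + k := t))) has_real_derivative funk_Ny k z) (at (z (2 + k)))"
proof -
  note pos = TD0_facts[OF assms(1)]
  have m: "2 + k < 4"
    using assms(2) by simp
  show ?thesis
    unfolding funk_N_def[abs_def] funk_Ny_def
    by (rule DERIV_cong, (rule derivative_eq_intros funk_derivs assms(1) m refl | use pos in \<open>simp; fail\<close>)+)
      (use pos assms(2) in \<open>auto simp: less_2_cases_iff funk_S'_def funk_a'_def funk_p'_def funk_q'_def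
        field_simps power2_eq_square\<close>)
qed

lemma pd_funk_P_y:
  assumes "z \<in> TD0" "k < 2"
  shows "pd (2 + k) funk_P z = funk_Py k z"
proof (rule pd_eqI)
  note pos = FF_pos[OF assms(1)]
  have m: "2 + k < 4"
    using assms(2) by simp
  show "((\<lambda>t. funk_P (z(2 + k := t))) has_real_derivative funk_Py k z) (at (z (2 + k)))"
    unfolding funk_P_def[abs_def] funk_Py_def
    by (rule DERIV_cong, (rule derivative_eq_intros DERIV_funk_N_y[OF assms] DERIV_FF[OF assms(1) m, unfolded FF'_y[OF assms]] refl
        | use pos in \<open>simp; fail\<close>)+)
      (use pos in \<open>simp add: field_simps power2_eq_square\<close>)
qed

section \<open>Values at the centre\<close>

definition ynorm :: "(nat \<Rightarrow> real) \<Rightarrow> real" where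
  "ynorm z = sqrt (funk_q z)"

definition funk_Py'_centre :: "nat \<Rightarrow> nat \<Rightarrow> (nat \<Rightarrow> real) \<Rightarrow> real" where
  "funk_Py'_centre k m z =
    (if m < 2 then (2 - bK^2) / (2 * rK^2) * (if m = k then 1 else 0)
     else bK / (2 * rK) * ((if m = 2 + k then 1 else 0) / ynorm z - z m * z (2 + k) / (ynorm z)^3))"

context
  fixes z :: "nat \<Rightarrow> real"
  assumes centre: "z 0 = 0" "z 1 = 0" and z_TD0: "z \<in> TD0"
begin

lemma ynorm_pos: "0 < ynorm z"
  using TD0_facts(2)[OF z_TD0] by (simp add: ynorm_def)

lemma ynorm_sq: "(ynorm z)^2 = (z 2)^2 + (z 3)^2"
  using TD0_facts(2)[OF z_TD0] by (simp add: ynorm_def funk_q_def)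

lemma funk_q_centre: "funk_q z = (ynorm z)^2"
  using TD0_facts(2)[OF z_TD0] by (simp add: ynorm_def)

lemma centre_values:
  shows "funk_a z = rK^2" "funk_c z = 1" "funk_p z = 0" "funk_S z = rK * ynorm z" "funk_a' m z = 0"
    and "funk_S' m z = rK * funk_q' m z / (2 * ynorm z)"
proof -
  show a: "funk_a z = rK^2" and p: "funk_p z = 0"
    using centre by (simp_all add: funk_a_def funk_p_def)
  show "funk_c z = 1"
    using centre by (simp add: funk_c_def)
  show a': "funk_a' m z = 0"
    using centre by (cases "m = 0"; cases "m = 1") (simp_all add: funk_a'_def)
  show S: "funk_S z = rK * ynorm z"
    using rK_pos by (simp add: funk_S_def a p ynorm_def real_sqrt_mult)
  show "funk_S' m z = rK * funk_q' m z / (2 * ynorm z)"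
    using rK_pos ynorm_pos by (simp add: funk_S'_def a a' p S power2_eq_square)
qed

lemma centre_funk_p': "m < 4 \<Longrightarrow> funk_p' m z = (if m < 2 then z (m + 2) else 0)"
  using centre by (auto simp: funk_p'_def dest: less_4_cases)

lemma centre_FF: "FF z = ynorm z / rK"
  using rK_pos by (simp add: FF_eq centre_values power2_eq_square)

lemma centre_funk_P: "funk_P z = bK * ynorm z / (2 * rK)"
  using rK_pos ynorm_pos
  by (simp add: funk_P_def funk_N_def centre_FF centre_values funk_q_centre field_simps power2_eq_square)

lemma centre_funk_N: "funk_N z = bK * (ynorm z)^2 / rK^2"
  using rK_pos by (simp add: funk_N_def centre_values funk_q_centre field_simps power2_eq_square)

lemma centre_FF': "FF' m z = (funk_S' m z + bK * funk_p' m z) / rK^2"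
  using rK_pos by (simp add: FF'_def centre_values field_simps power2_eq_square)

lemma centre_FFy: "k < 2 \<Longrightarrow> FFy k z = z (2 + k) / (rK * ynorm z)"
  using rK_pos ynorm_pos centre
  by (auto simp: FFy_def centre_values less_2_cases_iff field_simps power2_eq_square)

lemma centre_FFy':
  "k < 2 \<Longrightarrow> FFy' k m z = ((if m = 2 + k then 1 else 0) - z (2 + k) * funk_q' m z / (2 * (ynorm z)^2)) / (rK * ynorm z)
     + bK * (if m = k then 1 else 0) / rK^2"
  using rK_pos ynorm_pos centre
  by (auto simp: FFy'_def centre_values less_2_cases_iff field_simps power2_eq_square)

lemma centre_funk_Ny: "k < 2 \<Longrightarrow> funk_Ny k z = 2 * bK * z (2 + k) / rK^2"
  using rK_pos ynorm_pos centre
  by (auto simp: funk_Ny_def centre_values less_2_cases_iff field_simps power2_eq_square)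

lemma centre_funk_Py: "k < 2 \<Longrightarrow> funk_Py k z = bK * z (2 + k) / (2 * rK * ynorm z)"
  using rK_pos ynorm_pos
  by (simp add: funk_Py_def centre_funk_Ny centre_funk_N centre_FF centre_FFy field_simps power2_eq_square)

lemma DERIV_funk_N_centre:
  assumes "m < 4"
  shows "((\<lambda>t. funk_N (z(m := t))) has_real_derivative
    2 * ynorm z * funk_p' m z / rK^3 + bK * funk_q' m z / rK^2) (at (z m))"
proof -
  note pos = TD0_facts[OF z_TD0]
  show ?thesis
    unfolding funk_N_def[abs_def]
    by (rule DERIV_cong, (rule derivative_eq_intros funk_derivs z_TD0 assms refl | use pos in \<open>simp; fail\<close>)+)
      (use rK_pos ynorm_pos in \<open>simp add: centre_values field_simps power2_eq_square power3_eq_cube\<close>)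
qed

lemma DERIV_funk_Ny_centre:
  assumes "k < 2" "m < 4"
  shows "((\<lambda>t. funk_Ny k (z(m := t))) has_real_derivative
    2 * (rK * z (2 + k) * funk_p' m z / ynorm z + rK * ynorm z * (if m = k then 1 else 0)) / rK^4
    + 2 * bK * (if m = 2 + k then 1 else 0) / rK^2) (at (z m))"
proof -
  note pos = TD0_facts[OF z_TD0]
  have x_k: "z k = 0"
    using centre assms(1) by (auto simp: less_2_cases_iff)
  show ?thesis
    unfolding funk_Ny_def[abs_def]
    by (rule DERIV_cong, (rule derivative_eq_intros funk_derivs z_TD0 assms refl | use pos in \<open>simp; fail\<close>)+)
      (use rK_pos ynorm_pos in \<open>simp add: centre_values x_k field_simps power_numeral_reduce\<close>)
qed

lemma DERIV_funk_Py_centre: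
  assumes "k < 2" "m < 4"
  shows "((\<lambda>t. funk_Py k (z(m := t))) has_real_derivative funk_Py'_centre k m z) (at (z m))"
proof -
  have F: "0 < FF z"
    using FF_pos[OF z_TD0] .
  show ?thesis
    unfolding funk_Py_def[abs_def]
    apply (rule DERIV_cong, (rule derivative_eq_intros DERIV_funk_Ny_centre[OF assms] DERIV_FF[OF z_TD0 assms(2)]
        DERIV_funk_N_centre[OF assms(2)] DERIV_FFy[OF z_TD0 assms(2)] refl | use F in \<open>simp; fail\<close>)+)
    apply (simp only: fun_upd_triv centre_FF centre_funk_N centre_FFy[OF assms(1)] centre_funk_Ny[OF assms(1)]
        centre_FF' centre_FFy'[OF assms(1)] centre_values centre_funk_p'[OF assms(2)])
    using rK_pos ynorm_pos assms(1)
    by (cases "m < 2") (simp_all add: funk_Py'_centre_def funk_q'_def field_simps power_numeral_reduce)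
qed

lemma DERIV_pd_funk_P_y_centre:
  assumes "k < 2" "m < 4"
  shows "((\<lambda>t. pd (2 + k) funk_P (z(m := t))) has_real_derivative funk_Py'_centre k m z) (at (z m))"
  using open_TD0 z_TD0 _ DERIV_funk_Py_centre[OF assms]
  by (rule DERIV_coord_cong_open) (rule pd_funk_P_y[OF _ assms(1)])

lemma Ric_FF_centre: "Ric FF z = (funk_P z)^2 - (2 - bK^2) / (2 * rK^2) * (ynorm z)^2"
proof -
  have two: "(2::nat) + 0 = 2" "(2::nat) + 1 = 3"
    by simp_all
  have Py: "pd (2 + k) funk_P z = bK * z (2 + k) / (2 * rK * ynorm z)" if "k < 2" for k
    using pd_funk_P_y[OF z_TD0 that] centre_funk_Py[OF that] by simp
  have Pyy: "pd m (pd (2 + k) funk_P) z = funk_Py'_centre k m z"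
    if "k < 2" "m < 4" for k m
    using DERIV_pd_funk_P_y_centre[OF that] by (rule pd_eqI)
  note vals = Py[of 0, unfolded two] Py[of 1, unfolded two]
    Pyy[of 0 0, unfolded funk_Py'_centre_def two] Pyy[of 0 1, unfolded funk_Py'_centre_def two]
    Pyy[of 0 2, unfolded funk_Py'_centre_def two] Pyy[of 0 3, unfolded funk_Py'_centre_def two]
    Pyy[of 1 0, unfolded funk_Py'_centre_def two] Pyy[of 1 1, unfolded funk_Py'_centre_def two]
    Pyy[of 1 2, unfolded funk_Py'_centre_def two] Pyy[of 1 3, unfolded funk_Py'_centre_def two]
  have euler: "(\<Sum>k<2. pd (2 + k) funk_P z * z (2 + k)) = funk_P z"
    unfolding sum_lessThan_2 two using rK_pos ynorm_pos ynorm_sq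
    by (simp add: vals centre_funk_P field_simps) algebra
  have euler_y: "(\<Sum>j<2. \<Sum>k<2. pd (2 + j) (pd (2 + k) funk_P) z * z (2 + j) * z (2 + k)) = 0"
    unfolding sum_lessThan_2 two using rK_pos ynorm_pos ynorm_sq
    by (simp add: vals field_simps) algebra
  have hessian_x: "(\<Sum>j<2. \<Sum>k<2. pd j (pd (2 + k) funk_P) z * z (2 + j) * z (2 + k))
      = (2 - bK^2) / (2 * rK^2) * (ynorm z)^2"
    unfolding sum_lessThan_2 two using rK_pos ynorm_sq
    by (simp add: vals[unfolded One_nat_def] One_nat_def field_simps power2_eq_square)
  have "Ric FF z =
      2 * funk_P z * (\<Sum>j<2. \<Sum>k<2. pd (2 + j) (pd (2 + k) funk_P) z * z (2 + j) * z (2 + k))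
    + 4 * funk_P z * (\<Sum>k<2. pd (2 + k) funk_P z * z (2 + k)) - (\<Sum>k<2. pd (2 + k) funk_P z * z (2 + k))^2
    - 2 * (funk_P z)^2 - (\<Sum>j<2. \<Sum>k<2. pd j (pd (2 + k) funk_P) z * z (2 + j) * z (2 + k))"
  proof (rule Ric_projective_spray[OF open_TD0 z_TD0])
    show "Gspr FF i w = funk_P w * w (2 + i)" if "w \<in> TD0" "i < 2" for w i
      using that by (rule Gspr_FF)
    show "(\<lambda>t. funk_P (w(m := t))) field_differentiable at (w m)" if "w \<in> TD0" "m < 4" for w m
      using that by (rule funk_P_differentiable)
    show "(\<lambda>t. pd (2 + k) funk_P (z(m := t))) field_differentiable at (z m)" if "k < 2" "m < 4" for k m
      using DERIV_pd_funk_P_y_centre[OF that] unfolding field_differentiable_def by blast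
  qed
  then show ?thesis
    unfolding euler euler_y hessian_x by (simp add: power2_eq_square)
qed

lemma flag_curv_FF_centre: "flag_curv FF z = - (1 - 3/4 * bK^2)"
  using rK_pos ynorm_pos
  by (simp add: flag_curv_def Ric_FF_centre centre_FF centre_funk_P field_simps power2_eq_square)

end

lemma pt_centre_TD0:
  assumes "xi \<noteq> (0, 0)"
  shows "pt (0, 0) xi \<in> TD0"
proof -
  have "0 < (fst xi)^2 + (snd xi)^2"
    using assms by (cases xi) (simp add: sum_power2_gt_zero_iff)
  then show ?thesis
    using rK_pos by (simp add: TD0_def pt_def)
qed

theorem corollary4p2:
  fixes xi :: "real \<times> real"
  assumes "xi \<noteq> (0, 0)"
  shows "(0, 0) \<in> DK1
    \<and> flag_curv FF (pt (0, 0) xi) = - (1 - 3/4 * (1 - rK^2)^2)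
    \<and> - (1 - 3/4 * (1 - rK^2)^2) = - (1 - 3/4 * (4 * exp 2 / (exp 2 + 1)^2)^2)
    \<and> - (1 - 3/4 * (1 - rK^2)^2) < 0"
  unfolding bK_def[symmetric]
proof (intro conjI)
  show "(0, 0) \<in> DK1"
    using rK_pos by (simp add: DK1_def)
  show "flag_curv FF (pt (0, 0) xi) = - (1 - 3/4 * bK^2)"
    using pt_centre_TD0[OF assms] by (rule flag_curv_FF_centre[rotated 2]) (simp_all add: pt_def)
  show "- (1 - 3/4 * bK^2) = - (1 - 3/4 * (4 * exp 2 / (exp 2 + 1)^2)^2)"
    by (simp add: bK_eq)
  have "bK^2 < 1"
    using bK_pos bK_less_1 by (simp add: power_less_one_iff)
  then show "- (1 - 3/4 * bK^2) < 0"
    by simp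
qed

end
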